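(* Let $m\ge1$ be an integer. For every $f\in\mathsf{D}(A_0^m)$ with $f(+\infty)=0$, setting $(If)(x):=\int_0^xf(y)\,dy$, \[ \|f\,If\|_{\mathsf{D}(A_0^m)}\le N\|f\|^2_{\mathsf{D}(A_0^m)}, \] where $N$ depends only on $m$ and $w$.
   Context: Fix $w>0$. $H(\mathbb{R}_+)$ is the Hilbert space of locally integrable (absolutely continuous) functions $f$ on $\mathbb{R}_+$ with $f'\in L^2(\mathbb{R}_+,e^{wx}dx)$, with inner product $\langle f,g\rangle=f(+\infty)g(+\infty)+\int_0^\infty f'(x)g'(x)e^{wx}dx$, where $f(+\infty)=\lim_{x\to\infty}f(x)$ exists. $A_0$ is the generator of the left-translation semigroup on $H(\mathbb{R}_+)$: $A_0\phi=\phi'$ on $\mathsf{D}(A_0)=\{\phi\in H(\mathbb{R}_+):\phi'\in H(\mathbb{R}_+)\}$; $\mathsf{D}(A_0^m)$ has the graph norm $\|f\|^2_{\mathsf{D}(A_0^m)}=\sum_{j=0}^m\|A_0^jf\|^2_{H(\mathbb{R}_+)}$. *)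

theory Defs
  imports "HOL-Analysis.Analysis"
begin

text \<open>Functions on R_+ = [0,\<infinity>) are represented as real \<Rightarrow> real; only values on [0,\<infinity>) matter.\<close>

definition weak_deriv :: "(real \<Rightarrow> real) \<Rightarrow> (real \<Rightarrow> real) \<Rightarrow> bool" where
  "weak_deriv f g \<longleftrightarrow>
     (\<forall>x\<ge>0. set_integrable lborel {0..x} g \<and> f x = f 0 + (LINT y:{0..x}|lborel. g y))"

definition inH :: "real \<Rightarrow> (real \<Rightarrow> real) \<Rightarrow> bool" where
  "inH w f \<longleftrightarrow>
     (\<exists>g. weak_deriv f g \<and> set_integrable lborel {0..} (\<lambda>x. (g x)\<^sup>2 * exp (w * x)))
     \<and> (\<exists>L. (f \<longlongrightarrow> L) at_top)"

text \<open>A chosen derivative (preferring one lying in H, i.e. the continuous representative).\<close>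
definition Ader :: "real \<Rightarrow> (real \<Rightarrow> real) \<Rightarrow> (real \<Rightarrow> real)" where
  "Ader w f = (if \<exists>g. weak_deriv f g \<and> inH w g then (SOME g. weak_deriv f g \<and> inH w g)
               else (SOME g. weak_deriv f g))"

definition at_infty :: "(real \<Rightarrow> real) \<Rightarrow> real" where
  "at_infty f = Lim at_top f"

definition Hnorm2 :: "real \<Rightarrow> (real \<Rightarrow> real) \<Rightarrow> real" where
  "Hnorm2 w f = (at_infty f)\<^sup>2 + (LINT x:{0..}|lborel. (Ader w f x)\<^sup>2 * exp (w * x))"

fun A0pow :: "real \<Rightarrow> nat \<Rightarrow> (real \<Rightarrow> real) \<Rightarrow> (real \<Rightarrow> real)" where
  "A0pow w 0 f = f"
| "A0pow w (Suc j) f = Ader w (A0pow w j f)"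

definition inD :: "real \<Rightarrow> nat \<Rightarrow> (real \<Rightarrow> real) \<Rightarrow> bool" where
  "inD w m f \<longleftrightarrow> (\<forall>j\<le>m. inH w (A0pow w j f))"

definition Dnorm :: "real \<Rightarrow> nat \<Rightarrow> (real \<Rightarrow> real) \<Rightarrow> real" where
  "Dnorm w m f = sqrt (\<Sum>j\<le>m. Hnorm2 w (A0pow w j f))"

definition Iop :: "(real \<Rightarrow> real) \<Rightarrow> real \<Rightarrow> real" where
  "Iop f x = (LINT y:{0..x}|lborel. f y)"

end

(*
  Write f_j = A_0^j f and S = ||f||^2 of D(A_0^m).  Every function g of H(R_+) is bounded
  by a multiple of ||g||_H, because |g(x) - g(+oo)| is controlled, via Cauchy-Schwarz, by
  the weighted L^2 norm of g'; when g(+oo) = 0 the same estimate even gives decay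
  |g(x)| <= (||g||_H^2 / w)^(1/2) exp(-w x / 2).  Hence f_0, ..., f_m are bounded by
  multiples of sqrt S, and so is If, since f is integrable with exponential decay.
  By the Leibniz rule, A_0^k (f If) is a binomial combination of f_(k-i) A_0^i (If), where
  A_0^0 (If) = If and A_0^i (If) = f_(i-1) otherwise; so it is bounded by a multiple of S.
  In the weighted L^2 norm of its derivative every product has a bounded factor and a
  factor of weighted L^2 norm at most sqrt S, except f * f, which decays like exp(-w x).
*)
theory Submission
  imports Defs
begin

lemma power2_le_if_abs_le: "\<bar>x\<bar> \<le> y \<Longrightarrow> x\<^sup>2 \<le> (y::real)\<^sup>2"
  by (meson abs_ge_zero order_trans power2_le_iff_abs_le)

lemma power2_two_power: "(2 ^ k)\<^sup>2 = (4::real) ^ k"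
  by (simp add: power2_eq_square flip: power_mult_distrib)

lemma le_sqrt_mult_if_AM_GM_bound:
  fixes a E c :: real
  assumes E: "E \<ge> 0" and c: "c > 0" and h: "\<And>t. t > 0 \<Longrightarrow> a \<le> (t * E + c / t) / 2"
  shows "a \<le> sqrt (E * c)"
proof (cases "E = 0")
  case True
  show ?thesis
  proof (rule ccontr)
    assume "\<not> a \<le> sqrt (E * c)"
    then have "a > 0" using True by simp
    then show False using h[of "c / a"] c True by simp
  qed
next
  case False
  define t where "t = sqrt (c / E)"
  have "t > 0" "t * E = sqrt (E * c)" "c / t = sqrt (E * c)"
    using False E c by (simp_all add: t_def real_sqrt_divide real_sqrt_mult field_simps)
  then show ?thesis using h[of t] by simp
qed

lemma set_integral_nonneg:
  fixes f :: "'a \<Rightarrow> real"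
  shows "(\<And>x. x \<in> A \<Longrightarrow> 0 \<le> f x) \<Longrightarrow> 0 \<le> (LINT x:A|M. f x)"
  unfolding set_lebesgue_integral_def
  by (rule Bochner_Integration.integral_nonneg) (simp split: split_indicator)

lemma set_integral_mono_set:
  fixes f :: "'a \<Rightarrow> real"
  assumes "set_integrable M B f" "A \<in> sets M" "A \<subseteq> B" "\<And>x. x \<in> B \<Longrightarrow> 0 \<le> f x"
  shows "(LINT x:A|M. f x) \<le> (LINT x:B|M. f x)"
proof -
  have "set_integrable M A f" by (rule set_integrable_subset[OF assms(1-3)])
  then show ?thesis
    using assms unfolding set_lebesgue_integral_def set_integrable_def
    by (intro Bochner_Integration.integral_mono) (auto split: split_indicator)
qed

lemma exp_minus_set_integrable_atLeast:
  fixes c :: real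
  assumes c: "c > 0"
  shows "set_integrable lborel {a..} (\<lambda>s. exp (- c * s))"
    and "(LINT s:{a..}|lborel. exp (- c * s)) = exp (- c * a) / c"
proof -
  have "(\<integral>\<^sup>+s. ennreal (indicator {a..} s * exp (- c * s)) \<partial>lborel)
      = (\<integral>\<^sup>+s. ennreal (exp (- c * s)) * indicator {a..} s \<partial>lborel)"
    by (intro nn_integral_cong) (simp split: split_indicator)
  also have "\<dots> = 0 - (- exp (- c * a) / c)"
  proof (rule nn_integral_FTC_atLeast)
    show "((\<lambda>s. - exp (- c * s) / c) \<longlongrightarrow> 0) at_top"
      using c by real_asymp
  qed (use c in \<open>auto intro!: derivative_eq_intros\<close>)
  finally have nn: "(\<integral>\<^sup>+s. ennreal (indicator {a..} s * exp (- c * s)) \<partial>lborel) = ennreal (exp (- c * a) / c)"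
    by simp
  then show "set_integrable lborel {a..} (\<lambda>s. exp (- c * s))"
    unfolding set_integrable_def by (intro integrableI_nonneg) auto
  show "(LINT s:{a..}|lborel. exp (- c * s)) = exp (- c * a) / c"
    unfolding set_lebesgue_integral_def using c
    by (subst integral_eq_nn_integral) (use nn in auto)
qed

lemma exp_minus_integral_Ioc_le:
  fixes c :: real
  assumes c: "c > 0"
  shows "set_integrable lborel {a<..b} (\<lambda>s. exp (- c * s))"
    and "(LINT s:{a<..b}|lborel. exp (- c * s)) \<le> exp (- c * a) / c"
proof -
  show "set_integrable lborel {a<..b} (\<lambda>s. exp (- c * s))"
    by (rule set_integrable_subset[OF exp_minus_set_integrable_atLeast(1)[OF c, of a]]) auto
  have "(LINT s:{a<..b}|lborel. exp (- c * s)) \<le> (LINT s:{a..}|lborel. exp (- c * s))"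
    by (rule set_integral_mono_set[OF exp_minus_set_integrable_atLeast(1)[OF c]]) auto
  also have "\<dots> = exp (- c * a) / c"
    by (rule exp_minus_set_integrable_atLeast(2)[OF c])
  finally show "(LINT s:{a<..b}|lborel. exp (- c * s)) \<le> exp (- c * a) / c" .
qed

lemma set_integrable_mult_continuous:
  fixes g v :: "real \<Rightarrow> real"
  assumes g: "set_integrable lborel {a..b} g" and v: "continuous_on {a..b} v"
  shows "set_integrable lborel {a..b} (\<lambda>y. g y * v y)"
proof -
  obtain B where B: "B > 0" "\<And>y. y \<in> {a..b} \<Longrightarrow> \<bar>v y\<bar> \<le> B"
    using compact_imp_bounded[OF compact_continuous_image[OF v compact_Icc]]
    by (force simp: bounded_pos)
  have "(\<lambda>y. indicator {a..b} y * g y) \<in> borel_measurable borel"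
    using g unfolding set_integrable_def by (simp add: borel_measurable_integrable)
  moreover have "(\<lambda>y. indicator {a..b} y *\<^sub>R v y) \<in> borel_measurable borel"
    by (rule borel_measurable_continuous_on_indicator) (use v in auto)
  ultimately have "(\<lambda>y. (indicator {a..b} y * g y) * (indicator {a..b} y *\<^sub>R v y)) \<in> borel_measurable borel"
    by measurable
  moreover have "(\<lambda>y. (indicator {a..b} y * g y) * (indicator {a..b} y *\<^sub>R v y))
      = (\<lambda>y. indicator {a..b} y *\<^sub>R (g y * v y))"
    by (auto simp: indicator_def)
  ultimately have meas: "set_borel_measurable lborel {a..b} (\<lambda>y. g y * v y)"
    unfolding set_borel_measurable_def by simp
  show ?thesis
  proof (rule set_integrable_bound[OF _ meas])
    show "set_integrable lborel {a..b} (\<lambda>y. B * g y)" using g by simp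
    have "\<bar>g y * v y\<bar> \<le> B * \<bar>g y\<bar>" if "y \<in> {a..b}" for y
      using mult_right_mono[OF B(2)[OF that] abs_ge_zero[of "g y"]] by (simp add: abs_mult mult.commute)
    then show "AE y in lborel. y \<in> {a..b} \<longrightarrow> norm (g y * v y) \<le> norm (B * g y)"
      using B(1) by (intro AE_I2) (simp add: abs_mult)
  qed
qed

lemma integrable_triangle_product:
  fixes a b :: "real \<Rightarrow> real"
  assumes ia: "integrable lborel a" and ib: "integrable lborel b"
  shows "integrable (lborel \<Otimes>\<^sub>M lborel) (\<lambda>(t, s). a t * b s * indicator {..t} s)"
proof (rule lborel_pair.Fubini_integrable)
  have [measurable]: "a \<in> borel_measurable borel" "b \<in> borel_measurable borel"
    using ia ib by (simp_all add: borel_measurable_integrable)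
  have [measurable]: "Measurable.pred (borel \<Otimes>\<^sub>M borel) (\<lambda>p::real \<times> real. snd p \<in> {..fst p})"
  proof -
    have "{p::real \<times> real. snd p \<le> fst p} \<in> sets borel"
      by (intro borel_closed closed_Collect_le continuous_intros)
    then show ?thesis unfolding atMost_iff by (subst borel_prod) (simp add: pred_def)
  qed
  show "(\<lambda>(t, s). a t * b s * indicator {..t} s) \<in> borel_measurable (lborel \<Otimes>\<^sub>M lborel)"
    by measurable
  show "AE t in lborel. integrable lborel (\<lambda>s. case (t, s) of (t, s) \<Rightarrow> a t * b s * indicator {..t} s)"
    using ib by (auto intro!: integrable_mult_right integrable_real_mult_indicator)
  have "integrable lborel (\<lambda>t. \<bar>a t\<bar> * (\<integral>s. \<bar>b s\<bar> \<partial>lborel))"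
    using ia by (intro integrable_mult_left integrable_abs)
  then show "integrable lborel (\<lambda>t. \<integral>s. norm (case (t, s) of (t, s) \<Rightarrow> a t * b s * indicator {..t} s) \<partial>lborel)"
  proof (rule Bochner_Integration.integrable_bound)
    show "(\<lambda>t. \<integral>s. norm (case (t, s) of (t, s) \<Rightarrow> a t * b s * indicator {..t} s) \<partial>lborel) \<in> borel_measurable lborel"
      by measurable
    have "(\<integral>s. \<bar>b s\<bar> * indicator {..t} s \<partial>lborel) \<le> (\<integral>s. \<bar>b s\<bar> \<partial>lborel)" for t
      using ib by (intro integral_mono integrable_real_mult_indicator integrable_abs)
        (auto simp: indicator_def)
    then show "AE t in lborel. norm (\<integral>s. norm (case (t, s) of (t, s) \<Rightarrow> a t * b s * indicator {..t} s) \<partial>lborel)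
        \<le> norm (\<bar>a t\<bar> * (\<integral>s. \<bar>b s\<bar> \<partial>lborel))"
      by (intro AE_I2) (simp add: abs_mult mult.assoc integral_nonneg_AE mult_left_mono)
  qed
qed

lemma Fubini_triangle:
  fixes a b :: "real \<Rightarrow> real"
  assumes "integrable lborel a" "integrable lborel b"
  shows "(\<integral>t. a t * (\<integral>s. b s * indicator {..t} s \<partial>lborel) \<partial>lborel)
       = (\<integral>s. b s * (\<integral>t. a t * indicator {s..} t \<partial>lborel) \<partial>lborel)"
proof -
  define K where "K t s = a t * b s * indicator {..t} s" for t s
  have "integrable (lborel \<Otimes>\<^sub>M lborel) (case_prod K)"
    unfolding K_def using integrable_triangle_product[OF assms] by simp
  then have "(\<integral>s. (\<integral>t. K t s \<partial>lborel) \<partial>lborel) = (\<integral>t. (\<integral>s. K t s \<partial>lborel) \<partial>lborel)"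
    by (rule lborel_pair.Fubini_integral)
  moreover have "(\<integral>s. K t s \<partial>lborel) = a t * (\<integral>s. b s * indicator {..t} s \<partial>lborel)" for t
    unfolding K_def by (simp add: mult.assoc)
  moreover have "(\<integral>t. K t s \<partial>lborel) = b s * (\<integral>t. a t * indicator {s..} t \<partial>lborel)" for s
    unfolding K_def integral_mult_right_zero[symmetric]
    by (rule Bochner_Integration.integral_cong) (auto simp: indicator_def)
  ultimately show ?thesis
    by simp
qed

text \<open>The positive and negative parts of \<open>\<phi>\<close> are densities of finite measures that agree on
  all rays \<open>{a<..}\<close>, hence everywhere.\<close>
lemma AE_eq_0_if_integral_greaterThan_eq_0:
  fixes \<phi> :: "real \<Rightarrow> real"
  assumes \<phi>: "integrable lborel \<phi>" and zero: "\<And>a. (\<integral>x. \<phi> x * indicator {a<..} x \<partial>lborel) = 0"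
  shows "AE x in lborel. \<phi> x = 0"
proof -
  define p where "p x = max 0 (\<phi> x)" for x
  define q where "q x = max 0 (- \<phi> x)" for x
  have ip: "integrable lborel p" and iq: "integrable lborel q"
    unfolding p_def q_def by (intro integrable_max integrable_minus integrable_zero \<phi>)+
  have density_Ioi: "emeasure (density lborel h) {a<..} = ennreal (\<integral>x. h x * indicator {a<..} x \<partial>lborel)"
    if "integrable lborel h" "\<And>x. 0 \<le> h x" for h :: "real \<Rightarrow> real" and a
  proof -
    have "emeasure (density lborel h) {a<..} = (\<integral>\<^sup>+x. ennreal (h x * indicator {a<..} x) \<partial>lborel)"
      using that(1) by (subst emeasure_density) (auto intro!: nn_integral_cong split: split_indicator)
    also have "\<dots> = ennreal (\<integral>x. h x * indicator {a<..} x \<partial>lborel)"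
      using that by (intro nn_integral_eq_integral integrable_real_mult_indicator) auto
    finally show ?thesis .
  qed
  have pq_nonneg: "0 \<le> p x" "0 \<le> q x" for x by (simp_all add: p_def q_def)
  have "(\<integral>x. p x * indicator {a<..} x \<partial>lborel) = (\<integral>x. q x * indicator {a<..} x \<partial>lborel)" for a
  proof -
    have "(\<integral>x. p x * indicator {a<..} x \<partial>lborel) - (\<integral>x. q x * indicator {a<..} x \<partial>lborel)
          = (\<integral>x. p x * indicator {a<..} x - q x * indicator {a<..} x \<partial>lborel)"
      using ip iq by (intro Bochner_Integration.integral_diff[symmetric] integrable_real_mult_indicator) auto
    also have "\<dots> = (\<integral>x. \<phi> x * indicator {a<..} x \<partial>lborel)"
      by (rule Bochner_Integration.integral_cong) (auto simp: p_def q_def max_def split: split_indicator)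
    finally show ?thesis using zero[of a] by simp
  qed
  then have "density lborel p = density lborel q"
    by (intro measure_eqI_lessThan)
      (simp_all add: density_Ioi[OF ip pq_nonneg(1)] density_Ioi[OF iq pq_nonneg(2)])
  then have "AE x in lborel. ennreal (p x) = ennreal (q x)"
    using ip iq by (subst (asm) sigma_finite_measure.density_unique_iff[OF sigma_finite_lborel]) auto
  then show ?thesis
    by eventually_elim (auto simp: p_def q_def max_def split: if_splits)
qed

lemma continuous_on_AE_eq_imp_eq:
  fixes g h :: "real \<Rightarrow> real"
  assumes "continuous_on {0..} g" "continuous_on {0..} h"
    and ae: "AE x in lborel. 0 \<le> x \<longrightarrow> g x = h x" and x: "0 \<le> x"
  shows "g x = h x"
proof (rule ccontr)
  assume ne: "g x \<noteq> h x"
  define k where "k y = g y - h y" for y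
  have "continuous (at x within {0..}) k"
    using assms x unfolding k_def continuous_on_eq_continuous_within
    by (intro continuous_intros) auto
  moreover have "\<bar>k x\<bar> > 0" using ne by (simp add: k_def)
  ultimately obtain \<delta> where \<delta>: "\<delta> > 0" "\<And>y. y \<in> {0..} \<Longrightarrow> dist y x < \<delta> \<Longrightarrow> dist (k y) (k x) < \<bar>k x\<bar>"
    unfolding continuous_within_eps_delta by blast
  have "{x<..<x+\<delta>} \<subseteq> {y \<in> space lborel. \<not> (0 \<le> y \<longrightarrow> g y = h y)}"
  proof
    fix y assume y: "y \<in> {x<..<x+\<delta>}"
    then have "dist (k y) (k x) < \<bar>k x\<bar>" using \<delta>(2)[of y] x by (auto simp: dist_real_def)
    then show "y \<in> {y \<in> space lborel. \<not> (0 \<le> y \<longrightarrow> g y = h y)}"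
      using y x by (auto simp: k_def dist_real_def)
  qed
  moreover from ae obtain N where "{y \<in> space lborel. \<not> (0 \<le> y \<longrightarrow> g y = h y)} \<subseteq> N"
    "emeasure lborel N = 0" "N \<in> sets lborel"
    by (rule AE_E)
  ultimately have "emeasure lborel {x<..<x+\<delta>} \<le> 0"
    by (metis emeasure_mono order_trans)
  then show False using \<delta>(1) by simp
qed

section \<open>Weak derivatives on the half-line\<close>

lemma weak_deriv_integrable:
  "weak_deriv f g \<Longrightarrow> 0 \<le> x \<Longrightarrow> set_integrable lborel {0..x} g"
  unfolding weak_deriv_def by blast

lemma weak_deriv_eq:
  "weak_deriv f g \<Longrightarrow> 0 \<le> x \<Longrightarrow> f x = f 0 + (LINT y:{0..x}|lborel. g y)"
  unfolding weak_deriv_def by blast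

lemma weak_deriv_integrable_Ioc:
  assumes "weak_deriv f g" "0 \<le> a"
  shows "set_integrable lborel {a<..b} g"
  by (rule set_integrable_subset[OF weak_deriv_integrable[OF assms(1), of "max a b"]])
     (use assms(2) in auto)

lemma weak_deriv_diff:
  assumes "weak_deriv f g" "0 \<le> a" "a \<le> b"
  shows "f b - f a = (LINT y:{a<..b}|lborel. g y)"
proof -
  have "{0..b} = {0..a} \<union> {a<..b}" using assms by auto
  then have "(LINT y:{0..b}|lborel. g y) = (LINT y:{0..a}|lborel. g y) + (LINT y:{a<..b}|lborel. g y)"
    by (simp, intro set_integral_Un weak_deriv_integrable[OF assms(1)] weak_deriv_integrable_Ioc[OF assms(1)] assms) auto
  then show ?thesis
    using weak_deriv_eq[OF assms(1), of a] weak_deriv_eq[OF assms(1), of b] assms by auto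
qed

lemma weak_deriv_cong:
  assumes "weak_deriv f g" "\<And>x. 0 \<le> x \<Longrightarrow> f' x = f x" "\<And>x. 0 \<le> x \<Longrightarrow> g' x = g x"
  shows "weak_deriv f' g'"
  unfolding weak_deriv_def
proof (intro allI impI conjI)
  fix x :: real assume x: "0 \<le> x"
  have "set_integrable lborel {0..x} g' = set_integrable lborel {0..x} g"
    by (rule set_integrable_cong) (use assms(3) in auto)
  then show "set_integrable lborel {0..x} g'" using weak_deriv_integrable[OF assms(1) x] by simp
  have "(LINT y:{0..x}|lborel. g' y) = (LINT y:{0..x}|lborel. g y)"
    by (rule set_lebesgue_integral_cong) (use assms(3) in auto)
  then show "f' x = f' 0 + (LINT y:{0..x}|lborel. g' y)"
    using weak_deriv_eq[OF assms(1) x] assms(2) x by simp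
qed

lemma weak_deriv_add:
  assumes "weak_deriv f g" "weak_deriv f' g'"
  shows "weak_deriv (\<lambda>x. f x + f' x) (\<lambda>x. g x + g' x)"
  unfolding weak_deriv_def
proof (intro allI impI conjI)
  fix x :: real assume x: "0 \<le> x"
  note i = weak_deriv_integrable[OF assms(1) x] weak_deriv_integrable[OF assms(2) x]
  show "set_integrable lborel {0..x} (\<lambda>x. g x + g' x)" using i by (rule set_integral_add)
  show "f x + f' x = f 0 + f' 0 + (LINT y:{0..x}|lborel. g y + g' y)"
    using weak_deriv_eq[OF assms(1) x] weak_deriv_eq[OF assms(2) x] set_integral_add(2)[OF i] by simp
qed

lemma weak_deriv_cmult:
  assumes "weak_deriv f g"
  shows "weak_deriv (\<lambda>x. c * f x) (\<lambda>x. c * g x)"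
  unfolding weak_deriv_def
proof (intro allI impI conjI)
  fix x :: real assume x: "0 \<le> x"
  show "set_integrable lborel {0..x} (\<lambda>x. c * g x)"
    using weak_deriv_integrable[OF assms x] by simp
  show "c * f x = c * f 0 + (LINT y:{0..x}|lborel. c * g y)"
    using weak_deriv_eq[OF assms x] by (simp add: distrib_left)
qed

lemma weak_deriv_const: "weak_deriv (\<lambda>x. c) (\<lambda>x. 0)"
  unfolding weak_deriv_def by (simp add: set_integrable_def)

lemma weak_deriv_sum:
  "(\<And>i. i \<in> A \<Longrightarrow> weak_deriv (f i) (g i)) \<Longrightarrow>
   weak_deriv (\<lambda>x. \<Sum>i\<in>A. f i x) (\<lambda>x. \<Sum>i\<in>A. g i x)"
proof (induction A rule: infinite_finite_induct)
  case (insert a A)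
  then have "weak_deriv (\<lambda>x. f a x + (\<Sum>i\<in>A. f i x)) (\<lambda>x. g a x + (\<Sum>i\<in>A. g i x))"
    by (intro weak_deriv_add) auto
  then show ?case using insert(1,2) by simp
qed (simp_all add: weak_deriv_const)

lemma weak_deriv_continuous_on:
  assumes "weak_deriv f g"
  shows "continuous_on {0..} f"
  unfolding continuous_on_eq_continuous_within
proof
  fix x0 :: real assume "x0 \<in> {0..}"
  define b where "b = x0 + 1"
  have "g integrable_on {0..b}"
    using set_borel_integral_eq_integral(1)[OF weak_deriv_integrable[OF assms]] \<open>x0 \<in> {0..}\<close>
    by (simp add: b_def)
  then have "continuous_on {0..b} (\<lambda>x. f 0 + integral {0..x} g)"
    by (intro continuous_intros indefinite_integral_continuous_1)
  moreover have "f x = f 0 + integral {0..x} g" if "x \<in> {0..b}" for x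
    using weak_deriv_eq[OF assms, of x] set_borel_integral_eq_integral(2)[OF weak_deriv_integrable[OF assms]]
      that by simp
  ultimately have "continuous_on {0..b} f" by (metis (no_types, lifting) continuous_on_eq)
  then have "continuous (at x0 within {0..b}) f"
    using \<open>x0 \<in> {0..}\<close> b_def unfolding continuous_on_eq_continuous_within by simp
  moreover have "at x0 within {0..} = at x0 within {0..b}"
    by (rule at_within_nhd[where S="{..<b}"]) (auto simp: b_def)
  ultimately show "continuous (at x0 within {0..}) f" by simp
qed

lemma weak_deriv_borel_measurable:
  assumes "weak_deriv f g"
  shows "(\<lambda>x. indicator {0..} x * g x) \<in> borel_measurable borel"
proof (rule borel_measurable_LIMSEQ_real)
  fix n :: nat
  show "(\<lambda>x. indicator {0..real n} x * g x) \<in> borel_measurable borel"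
    using weak_deriv_integrable[OF assms, of "real n"]
    unfolding set_integrable_def by (simp add: borel_measurable_integrable)
next
  fix x :: real
  obtain N :: nat where "x \<le> real N" using real_arch_simple by blast
  then have "\<forall>\<^sub>F n in sequentially. indicator {0..real n} x * g x = indicator {0..} x * g x"
    unfolding eventually_sequentially by (intro exI[of _ N]) (auto simp: indicator_def)
  then show "(\<lambda>n. indicator {0..real n} x * g x) \<longlonglongrightarrow> indicator {0..} x * g x"
    by (rule tendsto_eventually)
qed

lemma weak_deriv_const_AE_eq_0:
  assumes wd: "weak_deriv (\<lambda>x. c) d"
  shows "AE x in lborel. 0 \<le> x \<longrightarrow> d x = 0"
proof -
  have AE_n: "AE x in lborel. indicator {0..real n} x * d x = 0" for n
  proof (rule AE_eq_0_if_integral_greaterThan_eq_0)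
    show "integrable lborel (\<lambda>x. indicator {0..real n} x * d x)"
      using weak_deriv_integrable[OF wd, of "real n"] unfolding set_integrable_def by simp
    fix a :: real
    have "(\<integral>x. indicator {0..real n} x * d x * indicator {a<..} x \<partial>lborel)
        = (LINT x:{a<..} \<inter> {0..real n}|lborel. d x)"
      unfolding set_lebesgue_integral_def
      by (rule Bochner_Integration.integral_cong) (auto split: split_indicator)
    also have "\<dots> = 0"
    proof (cases "a < 0")
      case True
      then have "{a<..} \<inter> {0..real n} = {0..real n}" by auto
      then show ?thesis using weak_deriv_eq[OF wd, of "real n"] by simp
    next
      case False
      then have "{a<..} \<inter> {0..real n} = {a<..max a (real n)}" by auto
      then show ?thesis using weak_deriv_diff[OF wd, of a "max a (real n)"] False by simp
    qed
    finally show "(\<integral>x. indicator {0..real n} x * d x * indicator {a<..} x \<partial>lborel) = 0" .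
  qed
  have "AE x in lborel. \<forall>n::nat. indicator {0..real n} x * d x = 0"
    using AE_n by (simp only: AE_all_countable) blast
  then show ?thesis
  proof eventually_elim
    case (elim x)
    obtain n :: nat where "x \<le> real n" using real_arch_simple by blast
    then show ?case using elim[rule_format, of n] by (auto simp: indicator_def)
  qed
qed

lemma weak_deriv_unique_AE:
  assumes "weak_deriv f g" "weak_deriv f h"
  shows "AE x in lborel. 0 \<le> x \<longrightarrow> g x = h x"
proof -
  have "weak_deriv (\<lambda>x. f x + (-1) * f x) (\<lambda>x. g x + (-1) * h x)"
    by (intro weak_deriv_add weak_deriv_cmult assms)
  then have "weak_deriv (\<lambda>x. 0) (\<lambda>x. g x - h x)"
    by (rule weak_deriv_cong) auto
  from weak_deriv_const_AE_eq_0[OF this] show ?thesis by eventually_elim auto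
qed

lemma weak_deriv_integration_by_parts:
  assumes u: "weak_deriv u u'" and v: "weak_deriv v v'" and x: "0 \<le> x"
  shows "(LINT t:{0..x}|lborel. u' t * (v t - v 0)) = (LINT s:{0..x}|lborel. v' s * (u x - u s))"
proof -
  define a where "a t = indicator {0..x} t * u' t" for t
  define b where "b s = indicator {0..x} s * v' s" for s
  have inner_t: "a t * (\<integral>s. b s * indicator {..t} s \<partial>lborel) = a t * (v t - v 0)" for t
  proof (cases "t \<in> {0..x}")
    case True
    then have "(\<integral>s. b s * indicator {..t} s \<partial>lborel) = (LINT s:{0..t}|lborel. v' s)"
      unfolding set_lebesgue_integral_def b_def
      by (intro Bochner_Integration.integral_cong) (auto split: split_indicator)
    then show ?thesis using weak_deriv_eq[OF v, of t] True by simp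
  qed (simp add: a_def)
  have inner_s: "b s * (\<integral>t. a t * indicator {s..} t \<partial>lborel) = b s * (u x - u s)" for s
  proof (cases "s \<in> {0..x}")
    case True
    then have "(\<integral>t. a t * indicator {s..} t \<partial>lborel) = (LINT t:{s..x}|lborel. u' t)"
      unfolding set_lebesgue_integral_def a_def
      by (intro Bochner_Integration.integral_cong) (auto split: split_indicator)
    also have "\<dots> = (LINT t:{s<..x}|lborel. u' t)"
      by (rule set_integral_discrete_difference[where X="{s}"]) auto
    also have "\<dots> = u x - u s" using weak_deriv_diff[OF u, of s x] True by simp
    finally show ?thesis by simp
  qed (simp add: b_def)
  have "(LINT t:{0..x}|lborel. u' t * (v t - v 0)) = (\<integral>t. a t * (v t - v 0) \<partial>lborel)"
    unfolding set_lebesgue_integral_def a_def by (simp add: mult.assoc)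
  also have "\<dots> = (\<integral>t. a t * (\<integral>s. b s * indicator {..t} s \<partial>lborel) \<partial>lborel)"
    by (simp only: inner_t)
  also have "\<dots> = (\<integral>s. b s * (\<integral>t. a t * indicator {s..} t \<partial>lborel) \<partial>lborel)"
    using weak_deriv_integrable[OF u x] weak_deriv_integrable[OF v x]
    unfolding a_def b_def set_integrable_def by (intro Fubini_triangle) simp_all
  also have "\<dots> = (\<integral>s. b s * (u x - u s) \<partial>lborel)"
    by (simp only: inner_s)
  also have "\<dots> = (LINT s:{0..x}|lborel. v' s * (u x - u s))"
    unfolding set_lebesgue_integral_def b_def by (simp add: mult.assoc)
  finally show ?thesis .
qed

lemma weak_deriv_mult:
  assumes u: "weak_deriv u u'" and v: "weak_deriv v v'"
  shows "weak_deriv (\<lambda>x. u x * v x) (\<lambda>x. u' x * v x + u x * v' x)"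
  unfolding weak_deriv_def
proof (intro allI impI conjI)
  fix x :: real assume x: "0 \<le> x"
  have cu: "continuous_on {0..x} u" and cv: "continuous_on {0..x} v"
    using weak_deriv_continuous_on[OF u] weak_deriv_continuous_on[OF v]
    by (auto elim: continuous_on_subset)
  note iu' = weak_deriv_integrable[OF u x] and iv' = weak_deriv_integrable[OF v x]
  have i1: "set_integrable lborel {0..x} (\<lambda>y. u' y * v y)"
    by (rule set_integrable_mult_continuous[OF iu' cv])
  have i2: "set_integrable lborel {0..x} (\<lambda>y. u y * v' y)"
    using set_integrable_mult_continuous[OF iv' cu] by (simp add: mult.commute)
  show "set_integrable lborel {0..x} (\<lambda>y. u' y * v y + u y * v' y)"
    using i1 i2 by (rule set_integral_add)
  have "(LINT t:{0..x}|lborel. u' t * (v t - v 0))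
      = (LINT t:{0..x}|lborel. u' t * v t) - v 0 * (u x - u 0)"
    using i1 iu' weak_deriv_eq[OF u x] by (simp add: right_diff_distrib set_integral_diff mult.commute)
  moreover have "(LINT s:{0..x}|lborel. v' s * (u x - u s))
      = u x * (v x - v 0) - (LINT s:{0..x}|lborel. u s * v' s)"
    using i2 iv' weak_deriv_eq[OF v x] by (simp add: right_diff_distrib set_integral_diff mult.commute)
  ultimately show "u x * v x = u 0 * v 0 + (LINT y:{0..x}|lborel. u' y * v y + u y * v' y)"
    using weak_deriv_integration_by_parts[OF u v x] i1 i2 by (simp add: set_integral_add algebra_simps)
qed

lemma weak_deriv_Iop:
  assumes "continuous_on {0..} f"
  shows "weak_deriv (Iop f) f"
  unfolding weak_deriv_def
proof (intro allI impI conjI)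
  fix x :: real assume "0 \<le> x"
  show "set_integrable lborel {0..x} f"
    using assms by (intro borel_integrable_atLeastAtMost') (auto elim: continuous_on_subset)
  have "Iop f 0 = (LINT y:{0<..0}|lborel. f y)"
    unfolding Iop_def by (rule set_integral_discrete_difference[where X="{0}"]) auto
  then have "Iop f 0 = 0" by (simp add: set_lebesgue_integral_def)
  then show "Iop f x = Iop f 0 + (LINT y:{0..x}|lborel. f y)" by (simp add: Iop_def)
qed

text \<open>Cauchy-Schwarz for the splitting \<open>|u'| = (|u'| exp (w s / 2)) exp (- w s / 2)\<close>,
  in the form of the AM-GM bound optimised over its parameter \<open>t\<close>.\<close>
lemma weak_deriv_abs_diff_le:
  fixes u u' :: "real \<Rightarrow> real"
  assumes wd: "weak_deriv u u'" and w: "w > 0"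
    and si: "set_integrable lborel {0..} (\<lambda>s. (u' s)\<^sup>2 * exp (w * s))"
    and xy: "0 \<le> x" "x \<le> y"
  shows "\<bar>u y - u x\<bar> \<le> sqrt ((LINT s:{0..}|lborel. (u' s)\<^sup>2 * exp (w * s)) * (exp (- w * x) / w))"
proof (rule le_sqrt_mult_if_AM_GM_bound)
  define E where "E = (LINT s:{0..}|lborel. (u' s)\<^sup>2 * exp (w * s))"
  show "0 \<le> E" unfolding E_def by (rule set_integral_nonneg) simp
  show "exp (- w * x) / w > 0" using w by simp
  fix t :: real assume t: "t > 0"
  have siA: "set_integrable lborel {x<..y} (\<lambda>s. (u' s)\<^sup>2 * exp (w * s))"
    by (rule set_integrable_subset[OF si]) (use xy in auto)
  note siB = exp_minus_integral_Ioc_le(1)[OF w, of x y]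
  have iu': "set_integrable lborel {x<..y} u'" by (rule weak_deriv_integrable_Ioc[OF wd xy(1)])
  have am_gm: "\<bar>u' s\<bar> \<le> (t / 2) * ((u' s)\<^sup>2 * exp (w * s)) + (1 / (2 * t)) * exp (- w * s)" for s
  proof -
    have "0 \<le> (t * \<bar>u' s\<bar> * exp (w * s) - 1)\<^sup>2 / (2 * t * exp (w * s))" using t by simp
    also have "\<dots> = (t / 2) * ((u' s)\<^sup>2 * exp (w * s)) + (1 / (2 * t)) * exp (- w * s) - \<bar>u' s\<bar>"
      using t by (simp add: field_simps power2_eq_square exp_minus)
    finally show ?thesis by simp
  qed
  have "\<bar>u y - u x\<bar> = \<bar>LINT s:{x<..y}|lborel. u' s\<bar>" using weak_deriv_diff[OF wd xy] by simp
  also have "\<dots> \<le> (LINT s:{x<..y}|lborel. \<bar>u' s\<bar>)"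
    using set_integral_norm_bound[OF iu'] by simp
  also have "\<dots> \<le> (LINT s:{x<..y}|lborel. (t / 2) * ((u' s)\<^sup>2 * exp (w * s)) + (1 / (2 * t)) * exp (- w * s))"
    using set_integrable_abs[OF iu'] siA siB am_gm
    by (intro set_integral_mono set_integral_add set_integrable_mult_right) auto
  also have "\<dots> = (t / 2) * (LINT s:{x<..y}|lborel. (u' s)\<^sup>2 * exp (w * s))
      + (1 / (2 * t)) * (LINT s:{x<..y}|lborel. exp (- w * s))"
    using siA siB by (simp add: set_integral_add set_integrable_mult_right)
  also have "\<dots> \<le> (t / 2) * E + (1 / (2 * t)) * (exp (- w * x) / w)"
    unfolding E_def using t xy exp_minus_integral_Ioc_le(2)[OF w, of x y]
    by (intro add_mono mult_left_mono set_integral_mono_set[OF si]) auto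
  finally show "\<bar>u y - u x\<bar> \<le> (t * E + exp (- w * x) / w / t) / 2"
    using t by (simp add: field_simps)
qed

lemma weak_deriv_abs_limit_diff_le:
  fixes u u' :: "real \<Rightarrow> real"
  assumes wd: "weak_deriv u u'" and w: "w > 0"
    and si: "set_integrable lborel {0..} (\<lambda>s. (u' s)\<^sup>2 * exp (w * s))"
    and lim: "(u \<longlongrightarrow> L) at_top" and x: "0 \<le> x"
  shows "\<bar>L - u x\<bar> \<le> sqrt ((LINT s:{0..}|lborel. (u' s)\<^sup>2 * exp (w * s)) * (exp (- w * x) / w))"
proof (rule tendsto_upperbound)
  show "((\<lambda>y. \<bar>u y - u x\<bar>) \<longlongrightarrow> \<bar>L - u x\<bar>) at_top"
    by (intro tendsto_intros lim)
  show "\<forall>\<^sub>F y in at_top. \<bar>u y - u x\<bar> \<le> sqrt ((LINT s:{0..}|lborel. (u' s)\<^sup>2 * exp (w * s)) * (exp (- w * x) / w))"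
    using eventually_ge_at_top[of x] by eventually_elim (rule weak_deriv_abs_diff_le[OF wd w si x])
qed simp

section \<open>The Leibniz formula for weak derivatives\<close>

lemma Leibniz_sum_step:
  fixes a b :: "nat \<Rightarrow> 'a::comm_semiring_1"
  shows "(\<Sum>i\<le>k. of_nat (k choose i) * (a (Suc (k - i)) * b i + a (k - i) * b (Suc i)))
       = (\<Sum>i\<le>Suc k. of_nat (Suc k choose i) * (a (Suc k - i) * b i))"
proof -
  have shift: "(\<Sum>i\<le>k. of_nat (k choose i) * (a (Suc (k - i)) * b i))
      = a (Suc k) * b 0 + (\<Sum>i\<le>k. of_nat (k choose Suc i) * (a (k - i) * b (Suc i)))"
  proof (cases k)
    case (Suc n)
    have "(\<Sum>i\<le>n. of_nat (Suc n choose Suc i) * (a (Suc (Suc n - Suc i)) * b (Suc i)))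
        = (\<Sum>i\<le>Suc n. of_nat (Suc n choose Suc i) * (a (Suc n - i) * b (Suc i)))"
      by (simp add: Suc_diff_le binomial_eq_0)
    then show ?thesis using Suc by (simp only: sum.atMost_Suc_shift) simp
  qed simp
  have "(\<Sum>i\<le>Suc k. of_nat (Suc k choose i) * (a (Suc k - i) * b i))
      = a (Suc k) * b 0 + (\<Sum>i\<le>k. of_nat (Suc k choose Suc i) * (a (k - i) * b (Suc i)))"
    by (simp only: sum.atMost_Suc_shift) simp
  also have "\<dots> = (\<Sum>i\<le>k. of_nat (k choose i) * (a (Suc (k - i)) * b i))
      + (\<Sum>i\<le>k. of_nat (k choose i) * (a (k - i) * b (Suc i)))"
    by (simp add: shift sum.distrib distrib_right add_ac)
  finally show ?thesis by (simp add: distrib_left sum.distrib)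
qed

definition Leibniz_sum :: "(nat \<Rightarrow> real \<Rightarrow> real) \<Rightarrow> (nat \<Rightarrow> real \<Rightarrow> real) \<Rightarrow> nat \<Rightarrow> real \<Rightarrow> real" where
  "Leibniz_sum u v k x = (\<Sum>i\<le>k. of_nat (k choose i) * (u (k - i) x * v i x))"

lemma weak_deriv_Leibniz_sum:
  assumes u: "\<And>i. i \<le> k \<Longrightarrow> weak_deriv (u i) (u (Suc i))"
    and v: "\<And>i. i \<le> k \<Longrightarrow> weak_deriv (v i) (v (Suc i))"
  shows "weak_deriv (Leibniz_sum u v k) (Leibniz_sum u v (Suc k))"
proof -
  have "weak_deriv (\<lambda>x. \<Sum>i\<le>k. of_nat (k choose i) * (u (k - i) x * v i x))
    (\<lambda>x. \<Sum>i\<le>k. of_nat (k choose i) * (u (Suc (k - i)) x * v i x + u (k - i) x * v (Suc i) x))"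
    by (intro weak_deriv_sum weak_deriv_cmult weak_deriv_mult u v) auto
  moreover have "Leibniz_sum u v (Suc k) x
      = (\<Sum>i\<le>k. of_nat (k choose i) * (u (Suc (k - i)) x * v i x + u (k - i) x * v (Suc i) x))" for x
    unfolding Leibniz_sum_def by (rule Leibniz_sum_step[where a="\<lambda>j. u j x" and b="\<lambda>j. v j x", symmetric])
  ultimately show ?thesis
    by (elim weak_deriv_cong) (simp_all add: Leibniz_sum_def)
qed

lemma abs_Leibniz_sum_le:
  assumes "\<And>i. i \<le> k \<Longrightarrow> \<bar>u (k - i) x * v i x\<bar> \<le> B"
  shows "\<bar>Leibniz_sum u v k x\<bar> \<le> 2 ^ k * B"
proof -
  have "\<bar>Leibniz_sum u v k x\<bar> \<le> (\<Sum>i\<le>k. of_nat (k choose i) * B)"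
    unfolding Leibniz_sum_def
  proof (rule order_trans[OF sum_abs sum_mono])
    fix i assume "i \<in> {..k}"
    then show "\<bar>of_nat (k choose i) * (u (k - i) x * v i x)\<bar> \<le> of_nat (k choose i) * B"
      using mult_left_mono[OF assms[of i] of_nat_0_le_iff] by (simp add: abs_mult)
  qed
  also have "\<dots> = 2 ^ k * B"
    by (simp add: choose_row_sum flip: sum_distrib_right of_nat_sum)
  finally show ?thesis .
qed

lemma Leibniz_sum_tendsto:
  assumes "\<And>i. i \<le> k \<Longrightarrow> \<exists>a. (u i \<longlongrightarrow> a) F" "\<And>i. i \<le> k \<Longrightarrow> \<exists>b. (v i \<longlongrightarrow> b) F"
  shows "\<exists>c. (Leibniz_sum u v k \<longlongrightarrow> c) F"
proof -
  obtain a b where "\<And>i. i \<le> k \<Longrightarrow> (u i \<longlongrightarrow> a i) F" "\<And>i. i \<le> k \<Longrightarrow> (v i \<longlongrightarrow> b i) F"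
    using assms by metis
  then have "(Leibniz_sum u v k \<longlongrightarrow> (\<Sum>i\<le>k. of_nat (k choose i) * (a (k - i) * b i))) F"
    unfolding Leibniz_sum_def[abs_def] by (intro tendsto_intros) auto
  then show ?thesis ..
qed

section \<open>Estimates in the space H\<close>

lemma weak_deriv_weighted_integral_cong:
  assumes wg: "weak_deriv f g" and wh: "weak_deriv f h"
    and sg: "set_integrable lborel {0..} (\<lambda>s. (g s)\<^sup>2 * exp (w * s))"
  shows "set_integrable lborel {0..} (\<lambda>s. (h s)\<^sup>2 * exp (w * s))"
    and "(LINT s:{0..}|lborel. (h s)\<^sup>2 * exp (w * s)) = (LINT s:{0..}|lborel. (g s)\<^sup>2 * exp (w * s))"
proof -
  have weighted: "indicator {0..} s *\<^sub>R ((k s)\<^sup>2 * exp (w * s)) = (indicator {0..} s * k s)\<^sup>2 * exp (w * s)"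
    for k :: "real \<Rightarrow> real" and s
    by (simp split: split_indicator)
  have [measurable]: "(\<lambda>x. indicator {0..} x * g x) \<in> borel_measurable borel"
    "(\<lambda>x. indicator {0..} x * h x) \<in> borel_measurable borel"
    by (rule weak_deriv_borel_measurable[OF wg], rule weak_deriv_borel_measurable[OF wh])
  have ae: "AE s in lborel. (indicator {0..} s * g s)\<^sup>2 * exp (w * s) = (indicator {0..} s * h s)\<^sup>2 * exp (w * s)"
    using weak_deriv_unique_AE[OF wg wh] by eventually_elim (simp split: split_indicator)
  show "set_integrable lborel {0..} (\<lambda>s. (h s)\<^sup>2 * exp (w * s))"
    using sg integrable_cong_AE[OF _ _ ae] unfolding set_integrable_def weighted by simp
  show "(LINT s:{0..}|lborel. (h s)\<^sup>2 * exp (w * s)) = (LINT s:{0..}|lborel. (g s)\<^sup>2 * exp (w * s))"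
    using integral_cong_AE[OF _ _ ae] unfolding set_lebesgue_integral_def weighted by simp
qed

lemma Ader_weak_deriv:
  assumes "inH w g"
  shows "weak_deriv g (Ader w g)"
proof -
  obtain h where h: "weak_deriv g h" using assms unfolding inH_def by blast
  show ?thesis
  proof (cases "\<exists>h. weak_deriv g h \<and> inH w h")
    case True
    then show ?thesis unfolding Ader_def using someI_ex[OF True] by simp
  next
    case False
    show ?thesis unfolding Ader_def if_not_P[OF False] using someI[of "weak_deriv g", OF h] .
  qed
qed

lemma Ader_weighted_integrable:
  assumes "inH w g"
  shows "set_integrable lborel {0..} (\<lambda>s. (Ader w g s)\<^sup>2 * exp (w * s))"
proof -
  obtain h where "weak_deriv g h" "set_integrable lborel {0..} (\<lambda>x. (h x)\<^sup>2 * exp (w * x))"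
    using assms unfolding inH_def by blast
  then show ?thesis
    using weak_deriv_weighted_integral_cong(1)[OF _ Ader_weak_deriv[OF assms]] by blast
qed

lemma Ader_eq_if_inH:
  assumes q: "weak_deriv g q" and qH: "inH w q" and x: "0 \<le> x"
  shows "Ader w g x = q x"
proof -
  have ex: "\<exists>h. weak_deriv g h \<and> inH w h" using q qH by blast
  then have a: "weak_deriv g (Ader w g) \<and> inH w (Ader w g)"
    unfolding Ader_def using someI_ex[OF ex] by simp
  show ?thesis
    using a qH x weak_deriv_unique_AE[OF conjunct1[OF a] q]
    by (intro continuous_on_AE_eq_imp_eq weak_deriv_continuous_on[OF Ader_weak_deriv]) auto
qed

lemma inH_tendsto_at_infty:
  assumes "inH w g"
  shows "(g \<longlongrightarrow> at_infty g) at_top"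
proof -
  obtain L where L: "(g \<longlongrightarrow> L) at_top" using assms unfolding inH_def by blast
  then have "at_infty g = L" unfolding at_infty_def by (intro tendsto_Lim) auto
  then show ?thesis using L by simp
qed

lemma weighted_integral_Ader_nonneg: "0 \<le> (LINT s:{0..}|lborel. (Ader w g s)\<^sup>2 * exp (w * s))"
  by (rule set_integral_nonneg) simp

lemma Hnorm2_ge:
  shows "(at_infty g)\<^sup>2 \<le> Hnorm2 w g"
    and "(LINT s:{0..}|lborel. (Ader w g s)\<^sup>2 * exp (w * s)) \<le> Hnorm2 w g"
  using weighted_integral_Ader_nonneg[of w g] unfolding Hnorm2_def by auto

lemma Hnorm2_nonneg: "0 \<le> Hnorm2 w g"
  using weighted_integral_Ader_nonneg[of w g] unfolding Hnorm2_def by simp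

lemma inH_abs_le:
  assumes g: "inH w g" and w: "w > 0" and x: "0 \<le> x"
  shows "\<bar>g x\<bar> \<le> (1 + 1 / sqrt w) * sqrt (Hnorm2 w g)"
proof -
  define E where "E = (LINT s:{0..}|lborel. (Ader w g s)\<^sup>2 * exp (w * s))"
  have "\<bar>at_infty g - g x\<bar> \<le> sqrt (E * (exp (- w * x) / w))"
    unfolding E_def using Ader_weak_deriv[OF g] w Ader_weighted_integrable[OF g] inH_tendsto_at_infty[OF g] x
    by (rule weak_deriv_abs_limit_diff_le)
  also have "\<dots> \<le> sqrt (Hnorm2 w g / w)"
  proof -
    have "E * exp (- w * x) \<le> Hnorm2 w g * 1"
      using Hnorm2_ge(2)[of w g] weighted_integral_Ader_nonneg[of w g] w x
      unfolding E_def by (intro mult_mono) auto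
    then show ?thesis using w by (intro real_sqrt_le_mono) (simp add: divide_right_mono)
  qed
  finally have "\<bar>at_infty g - g x\<bar> \<le> sqrt (Hnorm2 w g) / sqrt w"
    by (simp add: real_sqrt_divide)
  moreover have "\<bar>at_infty g\<bar> \<le> sqrt (Hnorm2 w g)"
    using Hnorm2_ge(1) real_sqrt_le_mono by fastforce
  ultimately show ?thesis by (simp add: algebra_simps)
qed

lemma inH_abs_le_exp:
  assumes g: "inH w g" and w: "w > 0" and x: "0 \<le> x" and lim: "(g \<longlongrightarrow> 0) at_top"
  shows "\<bar>g x\<bar> \<le> sqrt (Hnorm2 w g / w) * exp (- (w / 2) * x)"
proof -
  define E where "E = (LINT s:{0..}|lborel. (Ader w g s)\<^sup>2 * exp (w * s))"
  have "\<bar>0 - g x\<bar> \<le> sqrt (E * (exp (- w * x) / w))"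
    unfolding E_def using Ader_weak_deriv[OF g] w Ader_weighted_integrable[OF g] lim x
    by (rule weak_deriv_abs_limit_diff_le)
  also have "\<dots> \<le> sqrt (Hnorm2 w g / w * exp (- w * x))"
    using Hnorm2_ge(2)[of w g] w unfolding E_def by (intro real_sqrt_le_mono) (simp add: field_simps)
  also have "\<dots> = sqrt (Hnorm2 w g / w) * exp (- (w / 2) * x)"
  proof -
    have sq: "exp (- w * x) = (exp (- (w / 2) * x))\<^sup>2" by (simp add: power2_eq_square flip: exp_add)
    show ?thesis by (simp only: sq real_sqrt_mult real_sqrt_abs abs_exp_cancel)
  qed
  finally show ?thesis by simp
qed

lemma inH_cong:
  assumes "inH w g" "\<And>x. 0 \<le> x \<Longrightarrow> g' x = g x"
  shows "inH w g'"
proof -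
  obtain h L where h: "weak_deriv g h" "set_integrable lborel {0..} (\<lambda>x. (h x)\<^sup>2 * exp (w * x))"
    and L: "(g \<longlongrightarrow> L) at_top"
    using assms(1) unfolding inH_def by blast
  have "weak_deriv g' h" by (rule weak_deriv_cong[OF h(1)]) (use assms(2) in auto)
  moreover have "\<forall>\<^sub>F x in at_top. g x = g' x"
    using eventually_ge_at_top[of "0::real"] by eventually_elim (simp add: assms(2))
  then have "(g' \<longlongrightarrow> L) at_top" using L by (rule tendsto_cong[THEN iffD1])
  ultimately show ?thesis using h(2) unfolding inH_def by blast
qed

lemma Hnorm2_le:
  assumes g: "inH w g" and q: "weak_deriv g q"
    and sq: "set_integrable lborel {0..} (\<lambda>s. (q s)\<^sup>2 * exp (w * s))"
    and B: "\<And>x. 0 \<le> x \<Longrightarrow> \<bar>g x\<bar> \<le> B"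
    and Eb: "(LINT s:{0..}|lborel. (q s)\<^sup>2 * exp (w * s)) \<le> Eb"
  shows "Hnorm2 w g \<le> B\<^sup>2 + Eb"
proof -
  have "\<bar>at_infty g\<bar> \<le> B"
  proof (rule tendsto_upperbound)
    show "((\<lambda>x. \<bar>g x\<bar>) \<longlongrightarrow> \<bar>at_infty g\<bar>) at_top"
      by (intro tendsto_intros inH_tendsto_at_infty[OF g])
    show "\<forall>\<^sub>F x in at_top. \<bar>g x\<bar> \<le> B"
      using eventually_ge_at_top[of 0] by eventually_elim (rule B)
  qed simp
  then have "(at_infty g)\<^sup>2 \<le> B\<^sup>2" by (rule power2_le_if_abs_le)
  moreover have "(LINT s:{0..}|lborel. (Ader w g s)\<^sup>2 * exp (w * s)) = (LINT s:{0..}|lborel. (q s)\<^sup>2 * exp (w * s))"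
    by (rule weak_deriv_weighted_integral_cong(2)[OF q Ader_weak_deriv[OF g] sq])
  ultimately show ?thesis using Eb unfolding Hnorm2_def by simp
qed

section \<open>The product of f with its primitive\<close>

definition sup_const :: "real \<Rightarrow> real" where
  "sup_const w = 1 + 1 / sqrt w"

definition Iop_const :: "real \<Rightarrow> real" where
  "Iop_const w = 2 / (w * sqrt w)"

definition product_const :: "real \<Rightarrow> nat \<Rightarrow> real" where
  "product_const w m = 4 ^ m * (sup_const w + Iop_const w) ^ 4
     + 4 ^ Suc m * ((Iop_const w)\<^sup>2 + (sup_const w)\<^sup>2 + 1 / w) * (real m + 1 + 1 / w\<^sup>2)"

locale vanishing_D_element =
  fixes w :: real and m :: nat and f :: "real \<Rightarrow> real"
  assumes w_pos: "w > 0" and inD: "inD w m f" and tendsto_0: "(f \<longlongrightarrow> 0) at_top"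
begin

abbreviation Af :: "nat \<Rightarrow> real \<Rightarrow> real" where
  "Af k \<equiv> A0pow w k f"

definition S :: real where
  "S = (\<Sum>j\<le>m. Hnorm2 w (Af j))"

lemma inH_Af: "k \<le> m \<Longrightarrow> inH w (Af k)"
  using inD unfolding inD_def by blast

lemma weak_deriv_Af: "k \<le> m \<Longrightarrow> weak_deriv (Af k) (Af (Suc k))"
  using Ader_weak_deriv[OF inH_Af] by simp

lemma S_nonneg: "0 \<le> S"
  unfolding S_def by (intro sum_nonneg Hnorm2_nonneg)

lemma Hnorm2_Af_le_S: "k \<le> m \<Longrightarrow> Hnorm2 w (Af k) \<le> S"
  unfolding S_def by (rule member_le_sum) (auto intro: Hnorm2_nonneg)

lemma weighted_Af_Suc:
  assumes "k \<le> m"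
  shows "set_integrable lborel {0..} (\<lambda>s. (Af (Suc k) s)\<^sup>2 * exp (w * s))"
    and "(LINT s:{0..}|lborel. (Af (Suc k) s)\<^sup>2 * exp (w * s)) \<le> S"
  using Ader_weighted_integrable[OF inH_Af[OF assms]] Hnorm2_ge(2)[of w "Af k"] Hnorm2_Af_le_S[OF assms]
  by simp_all

lemma sup_const_pos: "sup_const w > 0"
  using w_pos by (simp add: sup_const_def add_pos_nonneg)

lemma Iop_const_pos: "Iop_const w > 0"
  using w_pos by (simp add: Iop_const_def)

lemma abs_Af_le: "k \<le> m \<Longrightarrow> 0 \<le> x \<Longrightarrow> \<bar>Af k x\<bar> \<le> sup_const w * sqrt S"
  using inH_abs_le[OF inH_Af w_pos, of k x] Hnorm2_Af_le_S[of k] sup_const_pos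
  unfolding sup_const_def by (meson mult_left_mono order_trans real_sqrt_le_mono less_imp_le)

lemma abs_f_le_exp: "0 \<le> x \<Longrightarrow> \<bar>f x\<bar> \<le> sqrt (S / w) * exp (- (w / 2) * x)"
proof -
  assume x: "0 \<le> x"
  have "inH w f" using inH_Af[of 0] by simp
  then have "\<bar>f x\<bar> \<le> sqrt (Hnorm2 w f / w) * exp (- (w / 2) * x)"
    using w_pos x tendsto_0 by (rule inH_abs_le_exp)
  also have "\<dots> \<le> sqrt (S / w) * exp (- (w / 2) * x)"
    using Hnorm2_Af_le_S[of 0] w_pos
    by (intro mult_right_mono real_sqrt_le_mono divide_right_mono) auto
  finally show ?thesis .
qed

lemma f_sq_le_exp: "0 \<le> x \<Longrightarrow> (f x)\<^sup>2 \<le> S / w * exp (- w * x)"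
proof -
  assume x: "0 \<le> x"
  have "(f x)\<^sup>2 \<le> (sqrt (S / w) * exp (- (w / 2) * x))\<^sup>2"
    using abs_f_le_exp[OF x] by (rule power2_le_if_abs_le)
  also have "\<dots> = (sqrt (S / w))\<^sup>2 * (exp (- (w / 2) * x))\<^sup>2"
    by (simp only: power_mult_distrib)
  also have "\<dots> = S / w * exp (- w * x)"
    using S_nonneg w_pos by (simp add: power2_eq_square flip: exp_add)
  finally show ?thesis .
qed

lemma weak_deriv_Iop_f: "weak_deriv (Iop f) f"
  using weak_deriv_Iop[OF weak_deriv_continuous_on[OF weak_deriv_Af[of 0]]] by simp

lemma abs_Iop_le: "0 \<le> x \<Longrightarrow> \<bar>Iop f x\<bar> \<le> Iop_const w * sqrt S"
proof -
  assume x: "0 \<le> x"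
  have f: "set_integrable lborel {0<..x} f"
    by (rule weak_deriv_integrable_Ioc[OF weak_deriv_Iop_f]) simp
  have "Iop f x = (LINT y:{0<..x}|lborel. f y)"
    unfolding Iop_def by (rule set_integral_discrete_difference[where X="{0}"]) auto
  then have "\<bar>Iop f x\<bar> \<le> (LINT y:{0<..x}|lborel. \<bar>f y\<bar>)"
    using set_integral_norm_bound[OF f] by simp
  also have "\<dots> \<le> (LINT y:{0<..x}|lborel. sqrt (S / w) * exp (- (w / 2) * y))"
    using set_integrable_abs[OF f] exp_minus_integral_Ioc_le(1)[of "w / 2"] w_pos abs_f_le_exp
    by (intro set_integral_mono set_integrable_mult_right) auto
  also have "\<dots> = sqrt (S / w) * (LINT y:{0<..x}|lborel. exp (- (w / 2) * y))"
    by simp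
  also have "\<dots> \<le> sqrt (S / w) * (exp (- (w / 2) * 0) / (w / 2))"
    using w_pos x S_nonneg by (intro mult_left_mono exp_minus_integral_Ioc_le(2)) auto
  also have "\<dots> = Iop_const w * sqrt S"
    using w_pos by (simp add: Iop_const_def real_sqrt_divide field_simps)
  finally show ?thesis .
qed

lemma f_integrable: "set_integrable lborel {0..} f"
proof (rule set_integrable_bound)
  show "set_integrable lborel {0..} (\<lambda>y. sqrt (S / w) * exp (- (w / 2) * y))"
    using exp_minus_set_integrable_atLeast(1)[of "w / 2"] w_pos by (intro set_integrable_mult_right) auto
  show "set_borel_measurable lborel {0..} f"
    unfolding set_borel_measurable_def using weak_deriv_borel_measurable[OF weak_deriv_Iop_f] by simp
  show "AE x in lborel. x \<in> {0..} \<longrightarrow> norm (f x) \<le> norm (sqrt (S / w) * exp (- (w / 2) * x))"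
    using abs_f_le_exp S_nonneg w_pos by (intro AE_I2) (simp add: abs_mult)
qed

lemma Iop_f_tendsto: "(Iop f \<longlongrightarrow> (LINT y:{0..}|lborel. f y)) at_top"
  unfolding Iop_def by (rule tendsto_set_lebesgue_integral_at_top[OF _ f_integrable]) auto

definition AIf :: "nat \<Rightarrow> real \<Rightarrow> real" where
  "AIf = case_nat (Iop f) (\<lambda>k. Af k)"

lemma AIf_simps [simp]: "AIf 0 = Iop f" "AIf (Suc k) = Af k"
  by (simp_all add: AIf_def)

lemma weak_deriv_AIf: "i \<le> m \<Longrightarrow> weak_deriv (AIf i) (AIf (Suc i))"
  using weak_deriv_Iop_f weak_deriv_Af by (cases i) auto

lemma abs_AIf_le: "i \<le> m \<Longrightarrow> 0 \<le> x \<Longrightarrow> \<bar>AIf i x\<bar> \<le> (sup_const w + Iop_const w) * sqrt S"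
  using abs_Iop_le[of x] abs_Af_le[of "i - 1" x] sup_const_pos Iop_const_pos S_nonneg
  by (cases i) (auto intro: order_trans[OF _ mult_right_mono])

lemma Af_tendsto: "k \<le> m \<Longrightarrow> \<exists>L. (Af k \<longlongrightarrow> L) at_top"
  using inH_tendsto_at_infty[OF inH_Af] by blast

lemma AIf_tendsto: "i \<le> m \<Longrightarrow> \<exists>L. (AIf i \<longlongrightarrow> L) at_top"
  using Iop_f_tendsto by (cases i) (auto intro: Af_tendsto)

definition P :: "nat \<Rightarrow> real \<Rightarrow> real" where
  "P = Leibniz_sum Af AIf"

lemma P_0: "P 0 x = f x * Iop f x"
  by (simp add: P_def Leibniz_sum_def)

lemma weak_deriv_P: "k \<le> m \<Longrightarrow> weak_deriv (P k) (P (Suc k))"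
  unfolding P_def by (intro weak_deriv_Leibniz_sum weak_deriv_Af weak_deriv_AIf) auto

lemma P_tendsto: "k \<le> m \<Longrightarrow> \<exists>L. (P k \<longlongrightarrow> L) at_top"
  unfolding P_def by (intro Leibniz_sum_tendsto Af_tendsto AIf_tendsto) auto

lemma abs_P_le:
  assumes "k \<le> m" "0 \<le> x"
  shows "\<bar>P k x\<bar> \<le> 2 ^ m * ((sup_const w + Iop_const w)\<^sup>2 * S)"
proof -
  have "\<bar>Af (k - i) x * AIf i x\<bar> \<le> (sup_const w + Iop_const w)\<^sup>2 * S" if "i \<le> k" for i
  proof -
    have "sup_const w * sqrt S \<le> (sup_const w + Iop_const w) * sqrt S"
      using Iop_const_pos S_nonneg by (intro mult_right_mono) auto
    moreover have "k - i \<le> m" using assms by simp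
    ultimately have "\<bar>Af (k - i) x\<bar> \<le> (sup_const w + Iop_const w) * sqrt S"
      using abs_Af_le[OF _ assms(2)] order_trans by blast
    then have "\<bar>Af (k - i) x * AIf i x\<bar> \<le> ((sup_const w + Iop_const w) * sqrt S) * ((sup_const w + Iop_const w) * sqrt S)"
      unfolding abs_mult using abs_AIf_le[of i x] assms that by (intro mult_mono) auto
    then show ?thesis using S_nonneg by (simp add: power2_eq_square mult_ac)
  qed
  then have "\<bar>P k x\<bar> \<le> 2 ^ k * ((sup_const w + Iop_const w)\<^sup>2 * S)"
    unfolding P_def by (rule abs_Leibniz_sum_le)
  also have "\<dots> \<le> 2 ^ m * ((sup_const w + Iop_const w)\<^sup>2 * S)"
    using assms S_nonneg by (intro mult_right_mono power_increasing) auto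
  finally show ?thesis .
qed

text \<open>A common majorant, up to a factor \<open>S\<close>, of the squares of all products occurring in
  \<open>P (Suc k)\<close>; its exponential term takes care of \<open>f * f\<close>.\<close>
definition G :: "real \<Rightarrow> real" where
  "G x = (\<Sum>j\<le>m. (Af (Suc j) x)\<^sup>2) + S / w * exp (- (2 * w) * x)"

lemma G_ge: "k \<le> m \<Longrightarrow> (Af (Suc k) x)\<^sup>2 \<le> G x" "S / w * exp (- (2 * w) * x) \<le> G x"
proof -
  have "0 \<le> (\<Sum>j\<le>m. (Af (Suc j) x)\<^sup>2)" "0 \<le> S / w * exp (- (2 * w) * x)"
    using S_nonneg w_pos by (auto intro: sum_nonneg)
  moreover have "k \<le> m \<Longrightarrow> (Af (Suc k) x)\<^sup>2 \<le> (\<Sum>j\<le>m. (Af (Suc j) x)\<^sup>2)"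
    by (rule member_le_sum) auto
  ultimately show "k \<le> m \<Longrightarrow> (Af (Suc k) x)\<^sup>2 \<le> G x" "S / w * exp (- (2 * w) * x) \<le> G x"
    unfolding G_def by linarith+
qed

lemma G_nonneg: "0 \<le> G x"
  using G_ge(2)[of x] S_nonneg w_pos by (meson divide_nonneg_pos exp_ge_zero mult_nonneg_nonneg order_trans)

lemma weighted_G:
  shows "set_integrable lborel {0..} (\<lambda>x. G x * exp (w * x))"
    and "(LINT x:{0..}|lborel. G x * exp (w * x)) \<le> (real m + 1) * S + S / w\<^sup>2"
proof -
  define h where "h j x = indicator {0..} x * ((Af (Suc j) x)\<^sup>2 * exp (w * x))" for j x
  have ih: "integrable lborel (h j)" and Ih: "(\<integral>x. h j x \<partial>lborel) \<le> S" if "j \<le> m" for j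
    using weighted_Af_Suc[OF that] unfolding h_def set_integrable_def set_lebesgue_integral_def by simp_all
  have sum: "set_integrable lborel {0..} (\<lambda>x. \<Sum>j\<le>m. (Af (Suc j) x)\<^sup>2 * exp (w * x))"
    "(LINT x:{0..}|lborel. (\<Sum>j\<le>m. (Af (Suc j) x)\<^sup>2 * exp (w * x))) \<le> (real m + 1) * S"
  proof -
    have eq: "indicator {0..} x *\<^sub>R (\<Sum>j\<le>m. (Af (Suc j) x)\<^sup>2 * exp (w * x)) = (\<Sum>j\<le>m. h j x)" for x
      by (simp add: h_def sum_distrib_left)
    show "set_integrable lborel {0..} (\<lambda>x. \<Sum>j\<le>m. (Af (Suc j) x)\<^sup>2 * exp (w * x))"
      unfolding set_integrable_def eq using ih by auto
    have "(\<Sum>j\<le>m. \<integral>x. h j x \<partial>lborel) \<le> (\<Sum>j\<le>m. S)" by (intro sum_mono Ih) auto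
    then show "(LINT x:{0..}|lborel. (\<Sum>j\<le>m. (Af (Suc j) x)\<^sup>2 * exp (w * x))) \<le> (real m + 1) * S"
      unfolding set_lebesgue_integral_def eq using ih by (simp add: integral_sum algebra_simps)
  qed
  have e: "set_integrable lborel {0..} (\<lambda>x. S / w * exp (- w * x))"
    "(LINT x:{0..}|lborel. S / w * exp (- w * x)) = S / w\<^sup>2"
    using exp_minus_set_integrable_atLeast[OF w_pos, of 0] by (simp_all add: power2_eq_square)
  have G_exp: "G x * exp (w * x) = (\<Sum>j\<le>m. (Af (Suc j) x)\<^sup>2 * exp (w * x)) + S / w * exp (- w * x)" for x
    by (simp add: G_def sum_distrib_right distrib_right mult.assoc flip: exp_add)
  show "set_integrable lborel {0..} (\<lambda>x. G x * exp (w * x))"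
    unfolding G_exp using sum(1) e(1) by (rule set_integral_add)
  show "(LINT x:{0..}|lborel. G x * exp (w * x)) \<le> (real m + 1) * S + S / w\<^sup>2"
    unfolding G_exp using sum e by (simp add: set_integral_add)
qed

lemma Af_product_sq_le_G:
  assumes "a + b \<le> m" "0 \<le> x"
  shows "(Af a x * Af b x)\<^sup>2 \<le> ((sup_const w)\<^sup>2 + 1 / w) * S * G x"
proof -
  have one_Suc: "(Af c x * Af (Suc d) x)\<^sup>2 \<le> ((sup_const w)\<^sup>2 + 1 / w) * S * G x" if "c \<le> m" "d \<le> m" for c d
  proof -
    have "(Af c x)\<^sup>2 \<le> (sup_const w * sqrt S)\<^sup>2"
      using abs_Af_le[OF that(1) assms(2)] by (rule power2_le_if_abs_le)
    then have "(Af c x)\<^sup>2 \<le> (sup_const w)\<^sup>2 * S"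
      using S_nonneg by (simp add: power_mult_distrib)
    then have "(Af c x * Af (Suc d) x)\<^sup>2 \<le> ((sup_const w)\<^sup>2 * S) * G x"
      unfolding power_mult_distrib using G_ge(1)[OF that(2)] S_nonneg by (intro mult_mono) auto
    also have "\<dots> \<le> ((sup_const w)\<^sup>2 + 1 / w) * S * G x"
      using w_pos S_nonneg G_nonneg[of x] by (intro mult_right_mono) auto
    finally show ?thesis .
  qed
  consider b' where "b = Suc b'" | a' where "a = Suc a'" | "a = 0" "b = 0"
    by (cases a; cases b) auto
  then show ?thesis
  proof cases
    case 1
    then show ?thesis using one_Suc[of a b'] assms(1) by simp
  next
    case 2
    then show ?thesis using one_Suc[of b a'] assms(1) by (simp add: mult.commute)
  next
    case 3
    have "(f x * f x)\<^sup>2 = ((f x)\<^sup>2)\<^sup>2" by (simp add: power2_eq_square)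
    also have "\<dots> \<le> (S / w * exp (- w * x))\<^sup>2"
      using f_sq_le_exp[OF assms(2)] by (intro power_mono) auto
    also have "\<dots> = 1 / w * S * (S / w * exp (- (2 * w) * x))"
      by (simp add: power2_eq_square field_simps flip: exp_add)
    also have "\<dots> \<le> ((sup_const w)\<^sup>2 + 1 / w) * S * G x"
      using w_pos S_nonneg G_ge(2)[of x] G_nonneg[of x]
      by (intro mult_mono) (auto simp: mult_nonneg_nonneg)
    finally show ?thesis using 3 by simp
  qed
qed

lemma P_Suc_sq_le_G:
  assumes "k \<le> m" "0 \<le> x"
  shows "(P (Suc k) x)\<^sup>2 \<le> 4 ^ Suc m * ((Iop_const w)\<^sup>2 + (sup_const w)\<^sup>2 + 1 / w) * S * G x"
proof -
  define c where "c = (Iop_const w)\<^sup>2 + (sup_const w)\<^sup>2 + 1 / w"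
  have c: "0 \<le> c * S * G x" using w_pos S_nonneg G_nonneg[of x] by (simp add: c_def)
  have "(Af (Suc k - i) x * AIf i x)\<^sup>2 \<le> c * S * G x" if "i \<le> Suc k" for i
  proof (cases i)
    case 0
    have "(Iop f x)\<^sup>2 \<le> (Iop_const w * sqrt S)\<^sup>2"
      using abs_Iop_le[OF assms(2)] by (rule power2_le_if_abs_le)
    then have "(Iop f x)\<^sup>2 \<le> (Iop_const w)\<^sup>2 * S"
      using S_nonneg by (simp add: power_mult_distrib)
    then have "(Af (Suc k) x * Iop f x)\<^sup>2 \<le> G x * ((Iop_const w)\<^sup>2 * S)"
      unfolding power_mult_distrib using G_ge(1)[OF assms(1)] G_nonneg by (intro mult_mono) auto
    also have "\<dots> \<le> c * S * G x"
      using w_pos S_nonneg G_nonneg[of x] by (simp add: c_def algebra_simps mult_right_mono)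
    finally show ?thesis using 0 by simp
  next
    case (Suc j)
    then have "(Af (k - j) x * Af j x)\<^sup>2 \<le> ((sup_const w)\<^sup>2 + 1 / w) * S * G x"
      using that assms by (intro Af_product_sq_le_G) auto
    also have "\<dots> \<le> c * S * G x"
      using S_nonneg G_nonneg[of x] by (intro mult_right_mono) (auto simp: c_def)
    finally show ?thesis using Suc by simp
  qed
  then have "\<bar>Af (Suc k - i) x * AIf i x\<bar> \<le> sqrt (c * S * G x)" if "i \<le> Suc k" for i
    using that by (intro real_le_rsqrt) simp
  then have "\<bar>P (Suc k) x\<bar> \<le> 2 ^ Suc k * sqrt (c * S * G x)"
    unfolding P_def by (rule abs_Leibniz_sum_le)
  then have "(P (Suc k) x)\<^sup>2 \<le> (2 ^ Suc k * sqrt (c * S * G x))\<^sup>2"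
    by (rule power2_le_if_abs_le)
  also have "\<dots> = 4 ^ Suc k * (c * S * G x)"
    using c by (simp only: power_mult_distrib power2_two_power real_sqrt_pow2)
  also have "\<dots> \<le> 4 ^ Suc m * (c * S * G x)"
    using assms c by (intro mult_right_mono power_increasing) auto
  finally show ?thesis by (simp add: c_def mult.assoc)
qed

lemma weighted_P_Suc:
  assumes "k \<le> m"
  shows "set_integrable lborel {0..} (\<lambda>x. (P (Suc k) x)\<^sup>2 * exp (w * x))"
    and "(LINT x:{0..}|lborel. (P (Suc k) x)\<^sup>2 * exp (w * x))
      \<le> 4 ^ Suc m * ((Iop_const w)\<^sup>2 + (sup_const w)\<^sup>2 + 1 / w) * S * ((real m + 1) * S + S / w\<^sup>2)"
proof -
  define C where "C = 4 ^ Suc m * ((Iop_const w)\<^sup>2 + (sup_const w)\<^sup>2 + 1 / w) * S"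
  have C: "0 \<le> C" using w_pos S_nonneg by (simp add: C_def)
  have dom: "set_integrable lborel {0..} (\<lambda>x. C * (G x * exp (w * x)))"
    using weighted_G(1) by (rule set_integrable_mult_right)
  have bound: "(P (Suc k) x)\<^sup>2 * exp (w * x) \<le> C * (G x * exp (w * x))" if "0 \<le> x" for x
    using P_Suc_sq_le_G[OF assms that] unfolding C_def by (simp add: mult_right_mono mult.assoc)
  have "(\<lambda>x. (indicator {0..} x * P (Suc k) x)\<^sup>2 * exp (w * x)) \<in> borel_measurable borel"
    using weak_deriv_borel_measurable[OF weak_deriv_P[OF assms]] by measurable
  moreover have "(\<lambda>x. (indicator {0..} x * P (Suc k) x)\<^sup>2 * exp (w * x))
      = (\<lambda>x. indicator {0..} x *\<^sub>R ((P (Suc k) x)\<^sup>2 * exp (w * x)))"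
    by (auto simp: indicator_def)
  ultimately have meas: "set_borel_measurable lborel {0..} (\<lambda>x. (P (Suc k) x)\<^sup>2 * exp (w * x))"
    unfolding set_borel_measurable_def by simp
  show si: "set_integrable lborel {0..} (\<lambda>x. (P (Suc k) x)\<^sup>2 * exp (w * x))"
  proof (rule set_integrable_bound[OF dom meas])
    have "norm ((P (Suc k) x)\<^sup>2 * exp (w * x)) \<le> norm (C * (G x * exp (w * x)))" if "0 \<le> x" for x
      using bound[OF that] C G_nonneg[of x] by (simp add: abs_mult)
    then show "AE x in lborel. x \<in> {0..} \<longrightarrow> norm ((P (Suc k) x)\<^sup>2 * exp (w * x)) \<le> norm (C * (G x * exp (w * x)))"
      by (intro AE_I2) auto
  qed
  have "(LINT x:{0..}|lborel. (P (Suc k) x)\<^sup>2 * exp (w * x)) \<le> (LINT x:{0..}|lborel. C * (G x * exp (w * x)))"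
    using bound by (intro set_integral_mono[OF si dom]) auto
  also have "\<dots> \<le> C * ((real m + 1) * S + S / w\<^sup>2)"
    using weighted_G(2) C by (simp add: mult_left_mono)
  finally show "(LINT x:{0..}|lborel. (P (Suc k) x)\<^sup>2 * exp (w * x))
      \<le> 4 ^ Suc m * ((Iop_const w)\<^sup>2 + (sup_const w)\<^sup>2 + 1 / w) * S * ((real m + 1) * S + S / w\<^sup>2)"
    by (simp add: C_def)
qed

lemma inH_P: "k \<le> m \<Longrightarrow> inH w (P k)"
  unfolding inH_def using weak_deriv_P weighted_P_Suc(1) P_tendsto by blast

lemma A0pow_product_eq_P: "k \<le> m \<Longrightarrow> 0 \<le> x \<Longrightarrow> A0pow w k (\<lambda>x. f x * Iop f x) x = P k x"
proof (induction k arbitrary: x)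
  case 0
  then show ?case by (simp add: P_0)
next
  case (Suc k)
  have "weak_deriv (A0pow w k (\<lambda>x. f x * Iop f x)) (P (Suc k))"
    using Suc by (intro weak_deriv_cong[OF weak_deriv_P[of k]]) auto
  then show ?case
    using Ader_eq_if_inH inH_P Suc.prems by simp
qed

lemma inD_product: "inD w m (\<lambda>x. f x * Iop f x)"
  unfolding inD_def using inH_cong[OF inH_P A0pow_product_eq_P] by blast

lemma Hnorm2_product_le:
  assumes "k \<le> m"
  shows "Hnorm2 w (A0pow w k (\<lambda>x. f x * Iop f x)) \<le> product_const w m * S\<^sup>2"
proof -
  have "inH w (A0pow w k (\<lambda>x. f x * Iop f x))"
    using inD_product assms unfolding inD_def by blast
  moreover have "weak_deriv (A0pow w k (\<lambda>x. f x * Iop f x)) (P (Suc k))"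
    using A0pow_product_eq_P[OF assms] by (intro weak_deriv_cong[OF weak_deriv_P[OF assms]]) auto
  ultimately have "Hnorm2 w (A0pow w k (\<lambda>x. f x * Iop f x))
      \<le> (2 ^ m * ((sup_const w + Iop_const w)\<^sup>2 * S))\<^sup>2
        + 4 ^ Suc m * ((Iop_const w)\<^sup>2 + (sup_const w)\<^sup>2 + 1 / w) * S * ((real m + 1) * S + S / w\<^sup>2)"
    using weighted_P_Suc[OF assms] abs_P_le[OF assms] A0pow_product_eq_P[OF assms]
    by (intro Hnorm2_le) auto
  also have "\<dots> = product_const w m * S\<^sup>2"
  proof -
    have sq: "(2 ^ m * (b\<^sup>2 * S))\<^sup>2 = 4 ^ m * b ^ 4 * S\<^sup>2" for b :: real
      by (simp add: power_mult_distrib flip: power_mult)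
        (simp add: power_mult power2_eq_square flip: power_mult_distrib)
    have lin: "A * b ^ 4 * S\<^sup>2 + B * c * S * ((real m + 1) * S + S / w\<^sup>2)
        = (A * b ^ 4 + B * c * (real m + 1 + 1 / w\<^sup>2)) * S\<^sup>2" for A B b c :: real
      by (simp add: power2_eq_square algebra_simps)
    show ?thesis unfolding product_const_def sq lin ..
  qed
  finally show ?thesis .
qed

lemma Dnorm_product_le:
  "Dnorm w m (\<lambda>x. f x * Iop f x) \<le> sqrt ((real m + 1) * product_const w m) * (Dnorm w m f)\<^sup>2"
proof -
  have "Dnorm w m (\<lambda>x. f x * Iop f x) \<le> sqrt (\<Sum>j\<le>m. product_const w m * S\<^sup>2)"
    unfolding Dnorm_def by (intro real_sqrt_le_mono sum_mono Hnorm2_product_le) auto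
  also have "\<dots> = sqrt ((real m + 1) * product_const w m) * S"
    using S_nonneg by (simp add: real_sqrt_mult)
  also have "S = (Dnorm w m f)\<^sup>2"
    unfolding Dnorm_def S_def using S_nonneg[unfolded S_def] by simp
  finally show ?thesis .
qed

end

theorem lemma5p5:
  fixes w :: real and m :: nat
  assumes "w > 0" and "m \<ge> 1"
  shows "\<exists>N::real. \<forall>f. inD w m f \<and> (f \<longlongrightarrow> 0) at_top \<longrightarrow>
           inD w m (\<lambda>x. f x * Iop f x) \<and>
           Dnorm w m (\<lambda>x. f x * Iop f x) \<le> N * (Dnorm w m f)\<^sup>2"
proof (intro exI allI impI)
  fix f :: "real \<Rightarrow> real"
  assume "inD w m f \<and> (f \<longlongrightarrow> 0) at_top"
  then interpret vanishing_D_element w m f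
    using assms(1) by unfold_locales auto
  show "inD w m (\<lambda>x. f x * Iop f x) \<and>
      Dnorm w m (\<lambda>x. f x * Iop f x) \<le> sqrt ((real m + 1) * product_const w m) * (Dnorm w m f)\<^sup>2"
    using inD_product Dnorm_product_le by blast
qed

end
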